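(* Let $u$ be a one-sided Sturmian sequence with left special sequence $l=l_1l_2\dots$, and let $n>1$ and $x\in\{0,1\}$ be such that $xL_{n-1}=xl_1l_2\dots l_{n-1}$ is a significant block of $\tilde X_u$. Then the HB diagram of $X_u^+$ contains the arrow $xl_1l_2\dots l_{n-1}\to xl_1l_2\dots l_n$.
   Context: A sequence $u\in\{0,1\}^{\mathbb N}$ is Sturmian if for every $n\ge1$ exactly $n+1$ distinct blocks of length $n$ occur in $u$. $X_u^+$ is the closure of $\{\sigma^n u:n\in\mathbb N\}$, $\sigma$ the shift $(\sigma x)_i=x_{i+1}$, and $\tilde X_u=\{x\in\{0,1\}^{\mathbb Z}: x_px_{p+1}\dots\in X_u^+\ \forall p\}$; the languages of $u$, $X_u^+$, $\tilde X_u$ coincide. For each $n$ there is a unique block $L_n$ of length $n$ with $0L_n$ and $1L_n$ in the language; these are the prefixes $L_n=l_1\dots l_n$ of the left special sequence $l$. For a block $a_{-n}\dots a_0$ in the language, $\mathrm{fol}(a_{-n}\dots a_0)=\{b_0b_1\dots\in X_u^+:\exists b\in\tilde X_u,\ b_{-n}\dots b_0=a_{-n}\dots a_0\}$. A block $a_{-n}\dots a_0$ ($n\ge1$) is significant if $\mathrm{fol}(a_{-n}\dots a_0)\subsetneq\mathrm{fol}(a_{-n+1}\dots a_0)$; $0$ and $1$ are also significant. $\mathrm{sig}(\cdot)$ is the longest significant suffix. The HB diagram has vertex set the significant blocks and an arrow $\alpha\to\beta$ iff there is a symbol $b$ with $\alpha b$ in the language and $\beta=\mathrm{sig}(\alpha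 b)$. *)

theory Defs
  imports "HOL-Analysis.Analysis" "HOL-Library.Sublist"
begin

text \<open>Sequences over the alphabet {0,1} are modelled as nat-valued functions; finite
blocks are lists of naturals. One-sided sequences: nat \<Rightarrow> nat (product topology of
discrete spaces); two-sided sequences: int \<Rightarrow> nat.\<close>

definition lang :: "(nat \<Rightarrow> nat) \<Rightarrow> nat list set" where
  "lang u = {w. \<exists>i. \<forall>j<length w. w ! j = u (i + j)}"

definition sturmian :: "(nat \<Rightarrow> nat) \<Rightarrow> bool" where
  "sturmian u \<longleftrightarrow> (\<forall>i. u i \<in> {0,1}) \<and>
     (\<forall>n\<ge>1. card {w \<in> lang u. length w = n} = n + 1)"

definition shift :: "(nat \<Rightarrow> nat) \<Rightarrow> (nat \<Rightarrow> nat)" where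
  "shift x = (\<lambda>i. x (Suc i))"

definition Xplus :: "(nat \<Rightarrow> nat) \<Rightarrow> (nat \<Rightarrow> nat) set" where
  "Xplus u = closure {(shift ^^ n) u | n. True}"

definition Xtilde :: "(nat \<Rightarrow> nat) \<Rightarrow> (int \<Rightarrow> nat) set" where
  "Xtilde u = {x. \<forall>p::int. (\<lambda>i::nat. x (p + int i)) \<in> Xplus u}"

text \<open>For a block w = a_{-n} ... a_0 (so length w = n+1), fol u w is the set of
right tails b_0 b_1 ... of two-sided points b with b_{-n} ... b_0 = w.\<close>
definition fol :: "(nat \<Rightarrow> nat) \<Rightarrow> nat list \<Rightarrow> (nat \<Rightarrow> nat) set" where
  "fol u w = {y \<in> Xplus u. \<exists>b \<in> Xtilde u.
      (\<forall>j<length w. b (int j - int (length w - 1)) = w ! j) \<and>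
      (\<forall>i. y i = b (int i))}"

definition significant :: "(nat \<Rightarrow> nat) \<Rightarrow> nat list \<Rightarrow> bool" where
  "significant u w \<longleftrightarrow> w = [0] \<or> w = [1] \<or>
     (w \<in> lang u \<and> length w \<ge> 2 \<and> fol u w \<subset> fol u (tl w))"

definition sig :: "(nat \<Rightarrow> nat) \<Rightarrow> nat list \<Rightarrow> nat list" where
  "sig u w = (THE s. suffix s w \<and> significant u s \<and>
       (\<forall>s'. suffix s' w \<and> significant u s' \<longrightarrow> length s' \<le> length s))"

definition HB_arrow :: "(nat \<Rightarrow> nat) \<Rightarrow> nat list \<Rightarrow> nat list \<Rightarrow> bool" where
  "HB_arrow u \<alpha> \<beta> \<longleftrightarrow> significant u \<alpha> \<and> significant u \<beta> \<and>
     (\<exists>b. \<alpha> @ [b] \<in> lang u \<and> \<beta> = sig u (\<alpha> @ [b]))"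

text \<open>l is the left special sequence l_1 l_2 ..., indexed from 1; L_n = l_1 ... l_n.\<close>
definition Lblock :: "(nat \<Rightarrow> nat) \<Rightarrow> nat \<Rightarrow> nat list" where
  "Lblock l n = map l [1..<n+1]"

definition left_special_seq :: "(nat \<Rightarrow> nat) \<Rightarrow> (nat \<Rightarrow> nat) \<Rightarrow> bool" where
  "left_special_seq u l \<longleftrightarrow>
     (\<forall>n. 0 # Lblock l n \<in> lang u \<and> 1 # Lblock l n \<in> lang u)"

end

theory Submission
  imports Defs
begin

text \<open>The target x L_n = x L_{n-1} l_n lies in the language because L_n is left special, and a
  significant block is its own longest significant suffix; so everything rests on x L_n being
  significant, i.e. on some future of L_n not being a future of x L_n. It suffices to find v with
  (1 - x) L_n v in the language but x L_n v not: extending (1 - x) L_n v to a two-sided point and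
  cutting it after L_n gives such a future. If no such v existed, the continuations of u after
  two occurrences of (1 - x) L_n (Sturmian sequences are recurrent) could never split, because at
  a split w v and x L_n v would be distinct right special factors of the same length, which
  complexity n + 1 forbids. Then u would be eventually periodic, which complexity n + 1 forbids
  as well.\<close>

section \<open>Windows and the shift orbit closure\<close>

lemma funpow_shift: "(shift ^^ n) u = (\<lambda>j. u (n + j))"
  by (induction n arbitrary: u) (auto simp: shift_def funpow_Suc_right)

definition window :: "(nat \<Rightarrow> 'a) \<Rightarrow> nat \<Rightarrow> nat \<Rightarrow> 'a list" where
  "window u s m = map (\<lambda>j. u (s + j)) [0..<m]"

lemma length_window [simp]: "length (window u s m) = m"
  by (simp add: window_def)

lemma nth_window [simp]: "j < m \<Longrightarrow> window u s m ! j = u (s + j)"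
  by (simp add: window_def)

lemma window_Suc: "window u s (Suc m) = window u s m @ [u (s + m)]"
  by (simp add: window_def)

lemma window_Suc_Cons: "window u s (Suc m) = u s # window u (Suc s) m"
  by (rule nth_equalityI) (auto simp: nth_Cons split: nat.split)

lemma window_add: "window u s (m + k) = window u s m @ window u (s + m) k"
  by (rule nth_equalityI) (auto simp: nth_append add.assoc)

lemma lang_iff_window: "w \<in> lang u \<longleftrightarrow> (\<exists>i. window u i (length w) = w)"
  by (auto simp: lang_def list_eq_iff_nth_eq) metis

lemma window_in_lang [simp]: "window u s m \<in> lang u"
  using lang_iff_window by fastforce

lemma lang_sublist:
  assumes "sublist v w" and "w \<in> lang u"
  shows "v \<in> lang u"
proof -
  obtain p s where w: "w = p @ v @ s" using assms(1) by (auto simp: sublist_def)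
  obtain i where "window u i (length w) = w" using assms(2) lang_iff_window by blast
  then have "window u i (length p) @ window u (i + length p) (length v)
      @ window u (i + length p + length v) (length s) = p @ v @ s"
    unfolding w by (simp add: window_add add.assoc)
  then have "window u (i + length p) (length v) = v" by simp
  then show ?thesis using lang_iff_window by blast
qed

lemma mem_Xplus_iff_prefixes: "y \<in> Xplus u \<longleftrightarrow> (\<forall>K. window y 0 K \<in> lang u)"
proof
  assume y: "y \<in> Xplus u"
  show "\<forall>K. window y 0 K \<in> lang u"
  proof
    fix K
    define T where "T = {f :: nat \<Rightarrow> nat. \<forall>j\<in>{..<K}. f (id j) \<in> {y j}}"
    have "open T" unfolding T_def
      by (rule product_topology_basis') (auto simp: open_discrete)
    moreover have "y \<in> T" by (simp add: T_def)
    ultimately obtain n where "(shift ^^ n) u \<in> T"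
      using y unfolding Xplus_def closure_iff_nhds_not_empty by blast
    then have "window y 0 K = window u n K"
      by (simp add: T_def funpow_shift window_def)
    then show "window y 0 K \<in> lang u" by simp
  qed
next
  assume prefixes: "\<forall>K. window y 0 K \<in> lang u"
  show "y \<in> Xplus u" unfolding Xplus_def closure_iff_nhds_not_empty
  proof (intro allI impI)
    fix A T :: "(nat \<Rightarrow> nat) set"
    assume "T \<subseteq> A" "open T" "y \<in> T"
    then have "openin (product_topology (\<lambda>i. euclidean) UNIV) T" by (simp add: open_fun_def)
    from product_topology_open_contains_basis[OF this \<open>y \<in> T\<close>] obtain X where
      X: "y \<in> (\<Pi>\<^sub>E i\<in>UNIV. X i)" "finite {i. X i \<noteq> UNIV}"
        "(\<Pi>\<^sub>E i\<in>UNIV. X i) \<subseteq> T"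
      by auto
    define K where "K = Suc (Max (insert 0 {i. X i \<noteq> UNIV}))"
    have K: "X j = UNIV" if "K \<le> j" for j
      using X(2) that Max_ge[of "insert 0 {i. X i \<noteq> UNIV}" j] by (fastforce simp: K_def)
    obtain i where "window u i K = window y 0 K"
      using prefixes lang_iff_window by (metis length_window)
    then have "u (i + j) = y j" if "j < K" for j
      using that by (metis add_0 nth_window)
    then have "u (i + j) \<in> X j" for j
      using X(1) K by (cases "j < K") (auto simp: not_less)
    then have "(\<lambda>j. u (i + j)) \<in> (\<Pi>\<^sub>E i\<in>UNIV. X i)" by (simp add: PiE_iff)
    then have "(shift ^^ i) u \<in> A" using X(3) \<open>T \<subseteq> A\<close> by (auto simp: funpow_shift)
    then show "{(shift ^^ n) u | n. True} \<inter> A \<noteq> {}" by blast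
  qed
qed

lemma mem_Xplus_iff: "y \<in> Xplus u \<longleftrightarrow> lang y \<subseteq> lang u"
  unfolding mem_Xplus_iff_prefixes
proof (intro iffI subsetI allI)
  fix w assume prefixes: "\<forall>K. window y 0 K \<in> lang u" and "w \<in> lang y"
  then obtain i where "window y i (length w) = w" using lang_iff_window by blast
  then have "window y 0 (i + length w) = window y 0 i @ w" by (simp add: window_add)
  then show "w \<in> lang u" using prefixes lang_sublist by (metis sublist_append_leftI)
qed auto

lemma mem_Xtilde_iff: "b \<in> Xtilde u \<longleftrightarrow> (\<forall>p. lang (\<lambda>i. b (p + int i)) \<subseteq> lang u)"
  by (simp add: Xtilde_def mem_Xplus_iff)

lemma Xtilde_translate:
  assumes "b \<in> Xtilde u"
  shows "(\<lambda>j. b (j + d)) \<in> Xtilde u"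
  unfolding mem_Xtilde_iff
proof
  fix p
  have "(\<lambda>i. b (p + int i + d)) = (\<lambda>i. b (p + d + int i))" by (simp add: ac_simps)
  then show "lang (\<lambda>i. b (p + int i + d)) \<subseteq> lang u"
    using assms unfolding mem_Xtilde_iff by metis
qed

section \<open>Factor complexity\<close>

definition factors :: "(nat \<Rightarrow> nat) \<Rightarrow> nat \<Rightarrow> nat list set" where
  "factors u m = {w \<in> lang u. length w = m}"

lemma factors_eq_range_window: "factors u m = range (\<lambda>s. window u s m)"
  unfolding factors_def lang_iff_window by auto (metis rangeI)

lemma factors_0 [simp]: "factors u 0 = {[]}"
  by (auto simp: factors_eq_range_window window_def)

lemma factors_eq_image_butlast: "factors u m = butlast ` factors u (Suc m)"
  by (simp add: factors_eq_range_window window_Suc image_image)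

lemma finite_factors:
  assumes "range u \<subseteq> A" and "finite A"
  shows "finite (factors u m)"
proof (rule finite_subset)
  show "factors u m \<subseteq> {w. set w \<subseteq> A \<and> length w = m}"
    using assms(1) by (auto simp: factors_eq_range_window window_def image_subset_iff)
qed (use assms(2) finite_lists_length_eq in blast)

lemma finite_factors_sturmian: "sturmian u \<Longrightarrow> finite (factors u m)"
  by (rule finite_factors[of u "{0, 1}"]) (simp_all add: sturmian_def image_subset_iff)

lemma card_factors_sturmian: "sturmian u \<Longrightarrow> card (factors u m) = m + 1"
  by (cases m) (simp_all add: sturmian_def factors_def[symmetric])

definition eventually_periodic :: "(nat \<Rightarrow> 'a) \<Rightarrow> bool" where
  "eventually_periodic u \<longleftrightarrow> (\<exists>i j. i < j \<and> (\<forall>t. u (i + t) = u (j + t)))"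

lemma card_factors_bounded_if_eventually_periodic:
  assumes "eventually_periodic u"
  shows "\<exists>C. \<forall>m. card (factors u m) \<le> C"
proof -
  obtain i j where ij: "i < j" "\<And>t. u (i + t) = u (j + t)"
    using assms unfolding eventually_periodic_def by blast
  have "\<exists>s' < j. window u s m = window u s' m" for s m
  proof (induction s rule: less_induct)
    case (less s)
    show ?case
    proof (cases "s < j")
      case False
      have "u (s + k) = u (s - (j - i) + k)" for k
      proof -
        have "s + k = j + (s - j + k)" "s - (j - i) + k = i + (s - j + k)" using False ij(1) by auto
        then show ?thesis using ij(2) by metis
      qed
      then have "window u s m = window u (s - (j - i)) m" by (simp add: window_def)
      with less.IH[of "s - (j - i)"] False ij(1) show ?thesis by auto
    qed auto
  qed
  then have "factors u m \<subseteq> (\<lambda>s. window u s m) ` {..<j}" for m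
    by (auto simp: factors_eq_range_window)
  then have "card (factors u m) \<le> j" for m
    by (metis card_image_le card_lessThan card_mono finite_imageI finite_lessThan order_trans)
  then show ?thesis by blast
qed

lemma sturmian_not_eventually_periodic: "sturmian u \<Longrightarrow> \<not> eventually_periodic u"
  using card_factors_bounded_if_eventually_periodic card_factors_sturmian
  by (metis Suc_eq_plus1 not_less_eq_eq order_refl)

text \<open>The Morse--Hedlund argument: if the complexity does not grow from length k to k + 1,
  every factor of length k has a unique right extension, so the sequence is determined by any
  window of length k, and two equal windows force periodicity.\<close>
lemma eventually_periodic_if_card_factors_Suc_le:
  assumes fin: "finite (factors v (Suc k))"
    and le: "card (factors v (Suc k)) \<le> card (factors v k)"
  shows "eventually_periodic v"
proof -
  have "card (factors v (Suc k)) = card (butlast ` factors v (Suc k))"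
    using le card_image_le[OF fin, of butlast] factors_eq_image_butlast[of v k] by simp
  then have inj: "inj_on butlast (factors v (Suc k))"
    using eq_card_imp_inj_on[OF fin] by metis
  have right_ext: "v (s + k) = v (s' + k)" if "window v s k = window v s' k" for s s'
  proof -
    have "butlast (window v s (Suc k)) = butlast (window v s' (Suc k))"
      using that by (simp add: window_Suc)
    moreover have "window v s (Suc k) \<in> factors v (Suc k)" "window v s' (Suc k) \<in> factors v (Suc k)"
      by (simp_all add: factors_eq_range_window)
    ultimately have "window v s (Suc k) = window v s' (Suc k)"
      using inj_onD[OF inj] by blast
    then show ?thesis by (simp add: window_Suc)
  qed
  define c where "c = card (factors v k)"
  have "finite (factors v k)" using fin factors_eq_image_butlast by (metis finite_imageI)
  then have "card ((\<lambda>s. window v s k) ` {..c}) < card {..c}"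
    by (metis c_def card_atMost card_mono factors_eq_range_window image_subset_iff
        le_imp_less_Suc rangeI)
  then obtain s0 s1 where "s0 \<noteq> s1" "window v s0 k = window v s1 k"
    using pigeonhole unfolding inj_on_def by blast
  then obtain s s' where ss': "s < s'" "window v s k = window v s' k"
    by (metis linorder_neqE_nat)
  have "v (s + t) = v (s' + t)" for t
  proof (induction t rule: less_induct)
    case (less t)
    show ?case
    proof (cases "t < k")
      case True
      then show ?thesis using nth_window[OF True] ss'(2) by metis
    next
      case False
      have "v (s + (t - k + j)) = v (s' + (t - k + j))" if "j < k" for j
        using less.IH[of "t - k + j"] that False by linarith
      then have "window v (s + (t - k)) k = window v (s' + (t - k)) k"
        by (simp add: window_def add.assoc)
      from right_ext[OF this] False show ?thesis by (simp add: add.assoc)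
    qed
  qed
  then show ?thesis using ss'(1) unfolding eventually_periodic_def by blast
qed

lemma sturmian_recurrent:
  assumes st: "sturmian u" and w: "w \<in> lang u"
  shows "\<exists>i\<ge>N. window u i (length w) = w"
proof (rule ccontr)
  assume absent: "\<not> ?thesis"
  define v where "v t = u (N + t)" for t
  have window_v: "window v s k = window u (N + s) k" for s k
    by (simp add: window_def v_def add.assoc)
  have "factors v (length w) \<subseteq> factors u (length w) - {w}"
    using absent by (auto simp: factors_eq_range_window window_v)
  then have "card (factors v (length w)) \<le> card (factors u (length w) - {w})"
    using finite_factors_sturmian[OF st] by (intro card_mono) auto
  also have "\<dots> = length w"
    using finite_factors_sturmian[OF st] card_factors_sturmian[OF st] w by (simp add: factors_def)
  finally have few: "card (factors v (length w)) \<le> length w" .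
  have many: "card (factors v k) \<ge> k + 1"
    if grows: "\<And>k. card (factors v k) < card (factors v (Suc k))" for k
  proof (induction k)
    case (Suc k)
    then show ?case using grows[of k] by simp
  qed simp
  have "\<exists>k. \<not> card (factors v k) < card (factors v (Suc k))"
    using many[of "length w"] few by fastforce
  then obtain k where "card (factors v (Suc k)) \<le> card (factors v k)"
    by (auto simp: not_less)
  moreover have "finite (factors v (Suc k))"
    using st unfolding v_def
    by (intro finite_factors[of _ "{0, 1}"]) (simp_all add: sturmian_def image_subset_iff)
  ultimately have "eventually_periodic v"
    by (rule eventually_periodic_if_card_factors_Suc_le[rotated])
  then have "eventually_periodic u"
    unfolding eventually_periodic_def v_def by (metis add.assoc add_less_cancel_left)
  with st sturmian_not_eventually_periodic show False by blast
qed

text \<open>Even without w1 0 and w2 0, the factors of length k + 1 still cover all k + 1 factors of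
  length k under butlast, although only k of them are left.\<close>
lemma sturmian_right_special_unique:
  assumes st: "sturmian u"
    and w1: "w1 @ [0] \<in> lang u" "w1 @ [1] \<in> lang u"
    and w2: "w2 @ [0] \<in> lang u" "w2 @ [1] \<in> lang u"
    and len: "length w1 = length w2"
  shows "w1 = w2"
proof (rule ccontr)
  assume "w1 \<noteq> w2"
  define k where "k = length w1"
  define A where "A = factors u (Suc k) - {w1 @ [0], w2 @ [0]}"
  have "factors u k \<subseteq> butlast ` A"
  proof
    fix w assume "w \<in> factors u k"
    then obtain a where a: "a \<in> factors u (Suc k)" "w = butlast a"
      using factors_eq_image_butlast by blast
    show "w \<in> butlast ` A"
    proof (cases "a \<in> {w1 @ [0], w2 @ [0]}")
      case True
      then have "w = w1 \<or> w = w2" "w1 @ [1] \<in> factors u (Suc k)" "w2 @ [1] \<in> factors u (Suc k)"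
        using a w1 w2 len by (auto simp: factors_def k_def)
      then show ?thesis by (force simp: A_def)
    qed (use a A_def in blast)
  qed
  then have "card (factors u k) \<le> card A"
    using finite_factors_sturmian[OF st]
    by (metis A_def card_image_le finite_Diff order_trans card_mono finite_imageI)
  moreover have "card A = card (factors u (Suc k)) - 2"
    using \<open>w1 \<noteq> w2\<close> w1 w2 len finite_factors_sturmian[OF st]
    by (simp add: A_def card_Diff_subset factors_def k_def)
  ultimately show False using card_factors_sturmian[OF st] by simp
qed

lemma exists_separating_extension:
  assumes st: "sturmian u" and bL: "b # L \<in> lang u" and "a \<noteq> b"
  shows "\<exists>v. (b # L) @ v \<in> lang u \<and> (a # L) @ v \<notin> lang u"
proof (rule ccontr)
  assume "\<not> ?thesis"
  then have ext: "(a # L) @ v \<in> lang u" if "(b # L) @ v \<in> lang u" for v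
    using that by blast
  define w where "w = b # L"
  obtain i where i: "window u i (length w) = w"
    using sturmian_recurrent[OF st bL, of 0] w_def by blast
  obtain j where j: "Suc i \<le> j" "window u j (length w) = w"
    using sturmian_recurrent[OF st bL, of "Suc i"] w_def by blast
  have "u (i + t) = u (j + t)" for t
  proof (induction t rule: less_induct)
    case (less t)
    show ?case
    proof (cases "t < length w")
      case True
      then show ?thesis using i j(2) by (metis nth_window)
    next
      case False
      define v where "v = window u (i + length w) (t - length w)"
      have "window u i t = w @ v"
        using window_add[of u i "length w" "t - length w"] i False by (simp add: v_def)
      moreover have "window u j t = window u i t"
        using less.IH by (simp add: window_def)
      ultimately have "(w @ v) @ [u (i + t)] \<in> lang u" "(w @ v) @ [u (j + t)] \<in> lang u"
        by (metis window_Suc window_in_lang)+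
      show ?thesis
      proof (rule ccontr)
        assume "u (i + t) \<noteq> u (j + t)"
        moreover have "u (i + t) \<in> {0, 1}" "u (j + t) \<in> {0, 1}" using st by (auto simp: sturmian_def)
        ultimately have "(w @ v) @ [0] \<in> lang u" "(w @ v) @ [1] \<in> lang u"
          using \<open>(w @ v) @ [u (i + t)] \<in> lang u\<close> \<open>(w @ v) @ [u (j + t)] \<in> lang u\<close> by auto
        moreover from this have "((a # L) @ v) @ [0] \<in> lang u" "((a # L) @ v) @ [1] \<in> lang u"
          using ext[of "v @ [0]"] ext[of "v @ [1]"] by (simp_all add: w_def)
        ultimately have "w @ v = (a # L) @ v"
          by (intro sturmian_right_special_unique[OF st]) (simp_all add: w_def)
        with \<open>a \<noteq> b\<close> show False by (simp add: w_def)
      qed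
    qed
  qed
  then have "eventually_periodic u"
    using j(1) unfolding eventually_periodic_def by (metis Suc_le_eq)
  with st sturmian_not_eventually_periodic show False by blast
qed

section \<open>Two-sided extensions of factors\<close>

lemma sturmian_extend_both_sides:
  assumes st: "sturmian u" and w: "w \<in> lang u"
  shows "\<exists>a c. a # w @ [c] \<in> lang u"
proof -
  obtain i where "window u (Suc i) (length w) = w"
    using sturmian_recurrent[OF st w, of 1] by (metis One_nat_def Suc_le_D)
  then have "window u i (Suc (length w) + 1) = u i # w @ [u (i + Suc (length w))]"
    by (simp only: window_add window_Suc_Cons) (simp add: window_def)
  then show ?thesis by (metis window_in_lang)
qed

primrec centred_extension :: "(nat \<Rightarrow> nat) \<Rightarrow> nat list \<Rightarrow> nat \<Rightarrow> nat list" where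
  "centred_extension u w 0 = w"
| "centred_extension u w (Suc k) =
     (SOME w'. w' \<in> lang u \<and> (\<exists>a c. w' = a # centred_extension u w k @ [c]))"

declare centred_extension.simps(2) [simp del]

lemma centred_extension_Suc:
  assumes "sturmian u" and "centred_extension u w k \<in> lang u"
  shows "centred_extension u w (Suc k) \<in> lang u \<and>
    (\<exists>a c. centred_extension u w (Suc k) = a # centred_extension u w k @ [c])"
  unfolding centred_extension.simps
  by (rule someI_ex) (use sturmian_extend_both_sides[OF assms] in blast)

lemma centred_extension_in_lang:
  "sturmian u \<Longrightarrow> w \<in> lang u \<Longrightarrow> centred_extension u w k \<in> lang u"
  by (induction k) (simp_all add: centred_extension_Suc)

lemma length_centred_extension:
  assumes "sturmian u" and "w \<in> lang u"
  shows "length (centred_extension u w k) = length w + 2 * k"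
proof (induction k)
  case (Suc k)
  obtain a c where "centred_extension u w (Suc k) = a # centred_extension u w k @ [c]"
    using centred_extension_Suc[OF assms(1) centred_extension_in_lang[OF assms]] by blast
  then show ?case using Suc.IH by simp
qed simp

lemma nth_centred_extension:
  assumes "sturmian u" and "w \<in> lang u" and "i < length (centred_extension u w k)"
  shows "centred_extension u w (k + t) ! (i + t) = centred_extension u w k ! i"
proof (induction t)
  case (Suc t)
  obtain a c where "centred_extension u w (Suc (k + t)) = a # centred_extension u w (k + t) @ [c]"
    using centred_extension_Suc[OF assms(1) centred_extension_in_lang[OF assms(1,2)]] by blast
  moreover have "i + t < length (centred_extension u w (k + t))"
    using assms(3) length_centred_extension[OF assms(1,2)] by simp
  ultimately show ?case using Suc by (simp add: nth_append)
qed simp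

lemma centred_extension_nth_int:
  assumes "sturmian u" and "w \<in> lang u" and "k \<le> k'"
    and "- int k \<le> j" and "j < int (length w) + int k"
  shows "centred_extension u w k' ! nat (j + int k') = centred_extension u w k ! nat (j + int k)"
proof -
  obtain t where k': "k' = k + t" using le_Suc_ex[OF assms(3)] by blast
  have "nat (j + int k') = nat (j + int k) + t" using assms(4) by (simp add: k')
  moreover have "nat (j + int k) < length (centred_extension u w k)"
    using assms(4,5) length_centred_extension[OF assms(1,2)] by simp
  ultimately show ?thesis using nth_centred_extension[OF assms(1,2)] k' by simp
qed

text \<open>Stage k of the centred extension contains w at offset k, and later stages agree with it;
  position j of the two-sided point is read off any stage k > |j|.\<close>
definition two_sided_extension :: "(nat \<Rightarrow> nat) \<Rightarrow> nat list \<Rightarrow> int \<Rightarrow> nat" where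
  "two_sided_extension u w j = (let k = nat \<bar>j\<bar> + 1 in centred_extension u w k ! nat (j + int k))"

lemma two_sided_extension_eq:
  assumes "sturmian u" and "w \<in> lang u"
    and "- int k \<le> j" and "j < int (length w) + int k"
  shows "two_sided_extension u w j = centred_extension u w k ! nat (j + int k)"
proof -
  define k0 where "k0 = nat \<bar>j\<bar> + 1"
  have "two_sided_extension u w j = centred_extension u w k0 ! nat (j + int k0)"
    by (simp add: two_sided_extension_def k0_def Let_def)
  also have "\<dots> = centred_extension u w (max k k0) ! nat (j + int (max k k0))"
    by (rule centred_extension_nth_int[symmetric, OF assms(1,2)]) (auto simp: k0_def)
  also have "\<dots> = centred_extension u w k ! nat (j + int k)"
    by (rule centred_extension_nth_int[OF assms(1,2)]) (use assms(3,4) in auto)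
  finally show ?thesis .
qed

lemma two_sided_extension_nth:
  "sturmian u \<Longrightarrow> w \<in> lang u \<Longrightarrow> j < length w \<Longrightarrow>
    two_sided_extension u w (int j) = w ! j"
  using two_sided_extension_eq[of u w 0 "int j"] by simp

lemma two_sided_extension_in_Xtilde:
  assumes st: "sturmian u" and w: "w \<in> lang u"
  shows "two_sided_extension u w \<in> Xtilde u"
  unfolding mem_Xtilde_iff
proof (intro allI subsetI)
  fix p v assume "v \<in> lang (\<lambda>i. two_sided_extension u w (p + int i))"
  then obtain s where s: "window (\<lambda>i. two_sided_extension u w (p + int i)) s (length v) = v"
    using lang_iff_window by blast
  define k where "k = nat \<bar>p\<bar> + s + length v"
  define E where "E = centred_extension u w k"
  obtain i where i: "window u i (length E) = E"
    using centred_extension_in_lang[OF st w] lang_iff_window E_def by blast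
  define d where "d = nat (p + int s + int k)"
  have "v ! j = u (i + d + j)" if "j < length v" for j
  proof -
    have "v ! j = two_sided_extension u w (p + int (s + j))"
      using nth_window[OF that, of "\<lambda>i. two_sided_extension u w (p + int i)" s] s by simp
    also have "\<dots> = E ! nat (p + int (s + j) + int k)"
      unfolding E_def using that by (intro two_sided_extension_eq[OF st w]) (auto simp: k_def)
    also have "nat (p + int (s + j) + int k) = d + j" by (simp add: d_def k_def)
    also have "E ! (d + j) = u (i + d + j)"
    proof -
      have "d + j < length E"
        using that by (simp add: E_def d_def k_def length_centred_extension[OF st w])
      then show ?thesis using i nth_window by (metis add.assoc)
    qed
    finally show ?thesis .
  qed
  then have "window u (i + d) (length v) = v" by (simp add: list_eq_iff_nth_eq)
  then show "v \<in> lang u" by (metis window_in_lang)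
qed

section \<open>Significance of left special blocks\<close>

lemma fol_Cons_subset: "fol u (a # w) \<subseteq> fol u w"
proof
  fix y assume "y \<in> fol u (a # w)"
  then obtain b where b: "y \<in> Xplus u" "b \<in> Xtilde u" "\<forall>i. y i = b (int i)"
    and ab: "\<And>j. j < Suc (length w) \<Longrightarrow> b (int j - int (length w)) = (a # w) ! j"
    by (auto simp: fol_def)
  have "b (int j - int (length w - 1)) = w ! j" if "j < length w" for j
  proof -
    have eq: "int j - int (length w - 1) = int (Suc j) - int (length w)" using that by simp
    then show ?thesis unfolding eq using ab[of "Suc j"] that by simp
  qed
  then show "y \<in> fol u w" using b by (auto simp: fol_def)
qed

lemma fol_Cons_psubset:
  assumes st: "sturmian u" and "w \<noteq> []"
    and wv: "w @ v \<in> lang u" and awv: "(a # w) @ v \<notin> lang u"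
  shows "fol u (a # w) \<subset> fol u w"
proof -
  define b where "b = two_sided_extension u (w @ v)"
  define c where "c j = b (j + (int (length w) - 1))" for j
  \<comment> \<open>c has w ending at position 0, so its right half z continues with v\<close>
  define z where "z i = c (int i)" for i
  have b: "b (int j) = (w @ v) ! j" if "j < length (w @ v)" for j
    using two_sided_extension_nth[OF st wv that] by (simp add: b_def)
  have c: "c \<in> Xtilde u"
    unfolding c_def b_def using two_sided_extension_in_Xtilde[OF st wv] by (rule Xtilde_translate)
  then have "(\<lambda>i. c (0 + int i)) \<in> Xplus u" unfolding Xtilde_def by blast
  then have "z \<in> Xplus u" by (simp add: z_def[abs_def])
  moreover have "c (int j - int (length w - 1)) = w ! j" if "j < length w" for j
    using b[of j] that \<open>w \<noteq> []\<close> by (simp add: c_def of_nat_diff nth_append)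
  ultimately have "z \<in> fol u w" using c by (auto simp: fol_def z_def)
  moreover have "z \<notin> fol u (a # w)"
  proof
    assume "z \<in> fol u (a # w)"
    then obtain d where d: "d \<in> Xtilde u" "\<forall>i. z i = d (int i)"
      and aw: "\<And>j. j < Suc (length w) \<Longrightarrow> d (int j - int (length w)) = (a # w) ! j"
      by (auto simp: fol_def)
    have "d (- int (length w) + int j) = ((a # w) @ v) ! j" if "j < length ((a # w) @ v)" for j
    proof (cases "j < Suc (length w)")
      case True
      then show ?thesis using aw[OF True] by (auto simp: nth_Cons nth_append split: nat.split)
    next
      case False
      define t where "t = j - Suc (length w)"
      have t: "j = Suc (length w) + t" "t < length v" using False that by (auto simp: t_def)
      have "d (- int (length w) + int j) = z (Suc t)" using d(2) t(1) by simp
      also have "\<dots> = b (int (length w + t))" by (simp add: z_def c_def algebra_simps)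
      also have "\<dots> = v ! t" using b[of "length w + t"] t(2) by (simp add: nth_append)
      finally show ?thesis using t(1) by (simp add: nth_append)
    qed
    then have "window (\<lambda>i. d (- int (length w) + int i)) 0 (length ((a # w) @ v)) = (a # w) @ v"
      by (simp add: list_eq_iff_nth_eq)
    then have "(a # w) @ v \<in> lang u"
      using d(1) unfolding mem_Xtilde_iff by (metis subsetD window_in_lang)
    with awv show False ..
  qed
  ultimately show ?thesis using fol_Cons_subset by blast
qed

lemma significant_Cons_left_special:
  assumes st: "sturmian u" and "L \<noteq> []"
    and "0 # L \<in> lang u" and "1 # L \<in> lang u" and x: "x \<in> {0, 1}"
  shows "significant u (x # L)"
proof -
  have "(1 - x) # L \<in> lang u" "x # L \<in> lang u" "x \<noteq> 1 - x" using assms(3-5) by auto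
  then obtain v where "((1 - x) # L) @ v \<in> lang u" "(x # L) @ v \<notin> lang u"
    using exists_separating_extension[OF st] by blast
  moreover from this have "L @ v \<in> lang u"
    using lang_sublist[OF sublist_append_leftI[of "L @ v" "[1 - x]"]] by simp
  ultimately have "fol u (x # L) \<subset> fol u L"
    using fol_Cons_psubset[OF st \<open>L \<noteq> []\<close>] by blast
  with \<open>x # L \<in> lang u\<close> \<open>L \<noteq> []\<close> show ?thesis
    by (simp add: significant_def Suc_le_eq)
qed

lemma sig_eq_self:
  assumes "significant u w"
  shows "sig u w = w"
  unfolding sig_def
proof (rule the_equality)
  fix s assume "suffix s w \<and> significant u s \<and>
    (\<forall>s'. suffix s' w \<and> significant u s' \<longrightarrow> length s' \<le> length s)"
  then have "suffix s w" "length w \<le> length s" using assms by auto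
  then show "s = w" using suffix_length_less suffix_order.le_less by fastforce
next
  show "suffix w w \<and> significant u w \<and>
    (\<forall>s'. suffix s' w \<and> significant u s' \<longrightarrow> length s' \<le> length w)"
    using assms by (auto dest: suffix_length_le)
qed

theorem lemma4p9:
  fixes u l :: "nat \<Rightarrow> nat" and n x :: nat
  assumes "sturmian u"
    and "left_special_seq u l"
    and "n > 1"
    and "x \<in> {0, 1}"
    and "significant u (x # Lblock l (n - 1))"
  shows "HB_arrow u (x # Lblock l (n - 1)) (x # Lblock l n)"
proof -
  have left_special: "0 # Lblock l k \<in> lang u" "1 # Lblock l k \<in> lang u" for k
    using assms(2) by (simp_all add: left_special_seq_def)
  have "Lblock l n \<noteq> []" using assms(3) by (simp add: Lblock_def)
  then have "significant u (x # Lblock l n)"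
    using significant_Cons_left_special[OF assms(1) _ left_special assms(4)] by blast
  moreover have "(x # Lblock l (n - 1)) @ [l n] = x # Lblock l n"
    using assms(3) by (cases n) (simp_all add: Lblock_def)
  moreover have "x # Lblock l n \<in> lang u" using left_special assms(4) by auto
  ultimately show ?thesis
    unfolding HB_arrow_def using assms(5) by (auto intro!: exI[of _ "l n"] simp: sig_eq_self)
qed

end
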